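(* Let $t\ge 2$ and $N\ge (t+2)^2$. Let $\mathrm X_N=\{\bm x_1,\ldots,\bm x_N\}\subset\mathbb S^2$ be a stationary point set of $A_{N,t}$, and assume that the minimal singular value of the basis matrix $\mathbf Y_{t+1}(\mathrm X_N)\in\mathbb R^{(t+2)^2\times N}$ is positive, i.e. all $(t+2)^2$ singular values of $\mathbf Y_{t+1}(\mathrm X_N)$ are positive. Then $\mathrm X_N$ is a spherical $t$-design.
   Context: $\mathbb S^2=\{\bm x\in\mathbb R^3:\lVert \bm x\rVert_2=1\}$ with surface measure $d\omega$. $\Pi_t$ denotes the space of (restrictions to $\mathbb S^2$ of) polynomials on $\mathbb R^3$ of degree at most $t$. A finite set $\mathrm X_N=\{\bm x_1,\ldots,\bm x_N\}\subset\mathbb S^2$ is a spherical $t$-design if $\frac1N\sum_{i=1}^N p(\bm x_i)=\frac{1}{4\pi}\int_{\mathbb S^2}p\,d\omega$ for all $p\in\Pi_t$. Let $\{\mathrm Y_n^k: n=0,\ldots,t,\ k=1,\ldots,2n+1\}$ be a complete set of real spherical harmonics orthonormal in $L_2(\mathbb S^2)$ forming a basis of $\Pi_t$ ($\mathrm Y_n^k$ of degree $n$), with $\mathrm Y_0^1=1/\sqrt{4\pi}$. Define $$A_{N,t}(\mathrm X_N)=\frac{4\pi}{N^2}\sum_{n=1}^t\sum_{k=1}^{2n+1}\Big(\sum_{i=1}^N\mathrm Y_n^k(\bm x_i)\Big)^2=\frac{4\pi}{N^2}\sum_{j=1}^N\sum_{i=1}^N\sum_{n=1}^t\frac{2n+1}{4\pi}\mathrm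 P_n(\langle\bm x_j,\bm x_i\rangle),$$ where $\mathrm P_n$ is the Legendre polynomial of degree $n$, viewed as a function of $(\bm x_1,\ldots,\bm x_N)\in(\mathbb S^2)^N$. $\mathrm X_N$ is a stationary point set of $A_{N,t}$ if for each $i$ the spherical (surface) gradient of $A_{N,t}$ with respect to $\bm x_i\in\mathbb S^2$ (the other points held fixed) vanishes at $\mathrm X_N$. For a degree $s$, the basis matrix $\mathbf Y_s(\mathrm X_N)\in\mathbb R^{(s+1)^2\times N}$ has rows indexed by $(n,k)$, $0\le n\le s$, $1\le k\le 2n+1$, and columns indexed by $i=1,\ldots,N$, with entry $\mathrm Y_n^k(\bm x_i)$ (so the first row is $\frac{1}{\sqrt{4\pi}}(1,\ldots,1)$). *)

theory Defs
  imports "HOL-Analysis.Analysis" "Jordan_Normal_Form.Char_Poly" "HOL-Library.Discrete_Functions"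
begin

text \<open>Points of R^3 are triples (x1, x2, x3) :: real \<times> real \<times> real with the Euclidean
  inner product and norm; S^2 = {x. norm x = 1}.\<close>

type_synonym pt3 = "real \<times> real \<times> real"

definition poly3 :: "nat \<Rightarrow> (pt3 \<Rightarrow> real) \<Rightarrow> bool" where
  "poly3 d p \<longleftrightarrow> (\<exists>c :: nat \<Rightarrow> nat \<Rightarrow> nat \<Rightarrow> real. \<forall>x.
     p x = (\<Sum>a\<le>d. \<Sum>b\<le>d. \<Sum>e\<le>d. if a + b + e \<le> d
              then c a b e * fst x ^ a * fst (snd x) ^ b * snd (snd x) ^ e else 0))"

text \<open>Surface integral over S^2 with respect to the surface measure, via spherical coordinates.\<close>
definition sph :: "real \<Rightarrow> real \<Rightarrow> pt3" where
  "sph \<theta> \<phi> = (sin \<theta> * cos \<phi>, sin \<theta> * sin \<phi>, cos \<theta>)"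

definition sphere_integral :: "(pt3 \<Rightarrow> real) \<Rightarrow> real" where
  "sphere_integral f = integral (cbox (0, 0) (pi, 2 * pi)) (\<lambda>(\<theta>, \<phi>). f (sph \<theta> \<phi>) * sin \<theta>)"

definition sph_harm_basis :: "nat \<Rightarrow> (nat \<Rightarrow> nat \<Rightarrow> pt3 \<Rightarrow> real) \<Rightarrow> bool" where
  "sph_harm_basis s Y \<longleftrightarrow>
     (\<forall>n\<le>s. \<forall>k\<in>{1..2*n+1}. poly3 n (Y n k)) \<and>
     (\<forall>n\<le>s. \<forall>k\<in>{1..2*n+1}. \<forall>n'\<le>s. \<forall>k'\<in>{1..2*n'+1}.
        sphere_integral (\<lambda>x. Y n k x * Y n' k' x) = (if n = n' \<and> k = k' then 1 else 0)) \<and>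
     (\<forall>x. Y 0 1 x = 1 / sqrt (4 * pi)) \<and>
     (\<forall>m\<le>s. \<forall>p. poly3 m p \<longrightarrow> (\<exists>a :: nat \<Rightarrow> nat \<Rightarrow> real. \<forall>x. norm x = 1 \<longrightarrow>
        p x = (\<Sum>n\<le>m. \<Sum>k\<in>{1..2*n+1}. a n k * Y n k x)))"

definition spherical_design :: "nat \<Rightarrow> nat \<Rightarrow> (nat \<Rightarrow> pt3) \<Rightarrow> bool" where
  "spherical_design t N x \<longleftrightarrow> (\<forall>p. poly3 t p \<longrightarrow>
     (1 / real N) * (\<Sum>i<N. p (x i)) = (1 / (4 * pi)) * sphere_integral p)"

definition A_Nt :: "(nat \<Rightarrow> nat \<Rightarrow> pt3 \<Rightarrow> real) \<Rightarrow> nat \<Rightarrow> nat \<Rightarrow> (nat \<Rightarrow> pt3) \<Rightarrow> real" where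
  "A_Nt Y N t x = 4 * pi / (real N)^2 *
     (\<Sum>n\<in>{1..t}. \<Sum>k\<in>{1..2*n+1}. (\<Sum>i<N. Y n k (x i))^2)"

text \<open>Stationary point set: for each i the spherical gradient of A_{N,t} w.r.t. x_i
  (other points fixed) vanishes, i.e. the derivative of A along every differentiable
  curve on S^2 through x_i vanishes.\<close>
definition stationary_A :: "(nat \<Rightarrow> nat \<Rightarrow> pt3 \<Rightarrow> real) \<Rightarrow> nat \<Rightarrow> nat \<Rightarrow> (nat \<Rightarrow> pt3) \<Rightarrow> bool" where
  "stationary_A Y N t x \<longleftrightarrow> (\<forall>i<N. \<forall>\<gamma> :: real \<Rightarrow> pt3.
     (\<forall>s. norm (\<gamma> s) = 1) \<longrightarrow> \<gamma> 0 = x i \<longrightarrow> \<gamma> differentiable (at 0) \<longrightarrow>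
     ((\<lambda>s. A_Nt Y N t (x(i := \<gamma> s))) has_real_derivative 0) (at 0))"

text \<open>Basis matrix Y_s(X_N), (s+1)^2 \<times> N; row r = n^2 + k - 1 corresponds to (n,k).\<close>
definition basis_matrix :: "(nat \<Rightarrow> nat \<Rightarrow> pt3 \<Rightarrow> real) \<Rightarrow> nat \<Rightarrow> nat \<Rightarrow> (nat \<Rightarrow> pt3) \<Rightarrow> real mat" where
  "basis_matrix Y s N x = mat ((s + 1)^2) N
     (\<lambda>(r, i). Y (floor_sqrt r) (r - (floor_sqrt r)^2 + 1) (x i))"

text \<open>Singular values of an m \<times> n matrix M with m \<le> n: the square roots of the m
  eigenvalues of M M^T.\<close>
definition singular_value :: "real mat \<Rightarrow> real \<Rightarrow> bool" where
  "singular_value M \<sigma> \<longleftrightarrow> \<sigma> \<ge> 0 \<and> eigenvalue (M * transpose_mat M) (\<sigma>^2)"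

end

theory Submission
  imports Defs
begin

text \<open>
  Put R n k = (\<Sum>i<N. Y n k (x i)) and g = (\<Sum>n\<in>{1..t}. \<Sum>k. R n k * Y n k), so that
  A_Nt is 4 pi / N^2 times the sum of the squares R n k^2. Moving one node along a great circle
  shows that stationarity means: the tangential part of the gradient of g vanishes at every node.
  The components of this tangential part are polynomials of degree at most t + 1, and since the
  basis matrix of degree t + 1 has full row rank, a polynomial of degree at most t + 1 vanishing
  at all nodes vanishes on the whole sphere. Hence g is constant on the sphere, so by
  orthonormality all R n k with n \<ge> 1 vanish, which is the design property.
\<close>

section \<open>Polynomials on R^3\<close>

definition monomial3 :: "nat \<times> nat \<times> nat \<Rightarrow> pt3 \<Rightarrow> real" where
  "monomial3 m x = fst x ^ fst m * fst (snd x) ^ fst (snd m) * snd (snd x) ^ snd (snd m)"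

lemma monomial3_Pair: "monomial3 (a, b, e) x = fst x ^ a * fst (snd x) ^ b * snd (snd x) ^ e"
  by (simp add: monomial3_def)

definition exponents3 :: "nat \<Rightarrow> (nat \<times> nat \<times> nat) set" where
  "exponents3 d = {(a, b, e). a + b + e \<le> d}"

lemma exponents3_subset_box: "exponents3 d \<subseteq> {..d} \<times> {..d} \<times> {..d}"
  by (auto simp: exponents3_def)

lemma finite_exponents3 [simp]: "finite (exponents3 d)"
  using exponents3_subset_box by (rule finite_subset) auto

lemma sum_box_eq_sum_exponents3:
  "(\<Sum>a\<le>d. \<Sum>b\<le>d. \<Sum>e\<le>d. if a + b + e \<le> d then f (a, b, e) else 0) = (\<Sum>m\<in>exponents3 d. f m)"
proof -
  have "(\<Sum>a\<le>d. \<Sum>b\<le>d. \<Sum>e\<le>d. if a + b + e \<le> d then f (a, b, e) else 0)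
      = (\<Sum>(a, b, e)\<in>{..d} \<times> {..d} \<times> {..d}. if a + b + e \<le> d then f (a, b, e) else 0)"
    by (simp add: sum.cartesian_product)
  also have "\<dots> = (\<Sum>m\<in>{..d} \<times> {..d} \<times> {..d}. if m \<in> exponents3 d then f m else 0)"
    by (intro sum.cong) (auto simp: exponents3_def)
  also have "\<dots> = (\<Sum>m\<in>exponents3 d. f m)"
    using exponents3_subset_box by (simp add: sum.inter_filter[symmetric] Int_absorb1 Int_def[symmetric])
  finally show ?thesis .
qed

lemma poly3_iff_monomial_sum:
  "poly3 d p \<longleftrightarrow> (\<exists>c. p = (\<lambda>x. \<Sum>m\<in>exponents3 d. c m * monomial3 m x))"
proof -
  have box: "(\<Sum>a\<le>d. \<Sum>b\<le>d. \<Sum>e\<le>d. if a + b + e \<le> d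
      then c a b e * fst x ^ a * fst (snd x) ^ b * snd (snd x) ^ e else 0)
    = (\<Sum>m\<in>exponents3 d. case_prod (\<lambda>a. case_prod (c a)) m * monomial3 m x)" for c x
    unfolding sum_box_eq_sum_exponents3[symmetric] by (simp add: monomial3_Pair mult.assoc cong: if_cong)
  show ?thesis
  proof
    assume "poly3 d p"
    then obtain c where "\<forall>x. p x = (\<Sum>a\<le>d. \<Sum>b\<le>d. \<Sum>e\<le>d. if a + b + e \<le> d
        then c a b e * fst x ^ a * fst (snd x) ^ b * snd (snd x) ^ e else 0)"
      unfolding poly3_def by blast
    then show "\<exists>c. p = (\<lambda>x. \<Sum>m\<in>exponents3 d. c m * monomial3 m x)"
      unfolding box by blast
  next
    assume "\<exists>c. p = (\<lambda>x. \<Sum>m\<in>exponents3 d. c m * monomial3 m x)"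
    then obtain c where "p = (\<lambda>x. \<Sum>m\<in>exponents3 d. c m * monomial3 m x)" ..
    then show "poly3 d p"
      unfolding poly3_def box by (intro exI[of _ "\<lambda>a b e. c (a, b, e)"]) simp
  qed
qed

lemma poly3_monomial_sumI:
  "poly3 d (\<lambda>x. \<Sum>m\<in>exponents3 d. c m * monomial3 m x)"
  unfolding poly3_iff_monomial_sum by blast

lemma poly3_zero: "poly3 d (\<lambda>x. 0)"
  using poly3_monomial_sumI[of d "\<lambda>m. 0"] by simp

lemma poly3_add:
  assumes "poly3 d p" "poly3 d q"
  shows "poly3 d (\<lambda>x. p x + q x)"
proof -
  obtain c c' where "p = (\<lambda>x. \<Sum>m\<in>exponents3 d. c m * monomial3 m x)"
    "q = (\<lambda>x. \<Sum>m\<in>exponents3 d. c' m * monomial3 m x)"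
    using assms unfolding poly3_iff_monomial_sum by blast
  then show ?thesis
    using poly3_monomial_sumI[of d "\<lambda>m. c m + c' m"] by (simp add: distrib_right sum.distrib)
qed

lemma poly3_cmult:
  assumes "poly3 d p"
  shows "poly3 d (\<lambda>x. r * p x)"
proof -
  obtain c where "p = (\<lambda>x. \<Sum>m\<in>exponents3 d. c m * monomial3 m x)"
    using assms unfolding poly3_iff_monomial_sum by blast
  then show ?thesis
    using poly3_monomial_sumI[of d "\<lambda>m. r * c m"] by (simp add: sum_distrib_left mult.assoc)
qed

lemma poly3_diff: "poly3 d p \<Longrightarrow> poly3 d q \<Longrightarrow> poly3 d (\<lambda>x. p x - q x)"
  using poly3_add[of d p "\<lambda>x. (-1) * q x"] poly3_cmult[of d q "-1"] by simp

lemma poly3_sum: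
  "finite S \<Longrightarrow> (\<And>s. s \<in> S \<Longrightarrow> poly3 d (f s)) \<Longrightarrow> poly3 d (\<lambda>x. \<Sum>s\<in>S. f s x)"
  by (induction S rule: finite_induct) (auto intro: poly3_zero poly3_add)

lemma poly3_monomial: "m \<in> exponents3 d \<Longrightarrow> poly3 d (monomial3 m)"
  using poly3_monomial_sumI[of d "\<lambda>m'. if m' = m then 1 else 0"]
  by (simp add: if_distrib[where f = "\<lambda>c. c * _"] cong: if_cong)

lemma poly3_mono:
  assumes "poly3 d p" "d \<le> d'"
  shows "poly3 d' p"
proof -
  obtain c where "p = (\<lambda>x. \<Sum>m\<in>exponents3 d. c m * monomial3 m x)"
    using assms(1) unfolding poly3_iff_monomial_sum by blast
  moreover have "exponents3 d \<subseteq> exponents3 d'"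
    using assms(2) by (auto simp: exponents3_def)
  ultimately show ?thesis
    by (auto intro!: poly3_sum poly3_cmult poly3_monomial)
qed

lemma monomial3_mult:
  "monomial3 (a, b, e) x * monomial3 (a', b', e') x = monomial3 (a + a', b + b', e + e') x"
  by (simp add: monomial3_Pair power_add)

lemma poly3_mult_monomial:
  assumes "poly3 d p"
  shows "poly3 (d + a + b + e) (\<lambda>x. monomial3 (a, b, e) x * p x)"
proof -
  obtain c where p: "p = (\<lambda>x. \<Sum>m\<in>exponents3 d. c m * monomial3 m x)"
    using assms unfolding poly3_iff_monomial_sum by blast
  have "poly3 (d + a + b + e) (\<lambda>x. c m * (monomial3 (a, b, e) x * monomial3 m x))"
    if "m \<in> exponents3 d" for m
  proof -
    obtain a' b' e' where m: "m = (a', b', e')" by (cases m)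
    have "(a + a', b + b', e + e') \<in> exponents3 (d + a + b + e)"
      using that by (auto simp: m exponents3_def)
    then show ?thesis
      unfolding m monomial3_mult by (intro poly3_cmult poly3_monomial)
  qed
  then show ?thesis
    unfolding p sum_distrib_left by (intro poly3_sum) (simp_all add: ac_simps)
qed

lemma poly3_mult_coordinate:
  assumes "poly3 d p"
  shows "poly3 (Suc d) (\<lambda>x. fst x * p x)" "poly3 (Suc d) (\<lambda>x. fst (snd x) * p x)"
    "poly3 (Suc d) (\<lambda>x. snd (snd x) * p x)"
  using poly3_mult_monomial[OF assms, of 1 0 0] poly3_mult_monomial[OF assms, of 0 1 0]
    poly3_mult_monomial[OF assms, of 0 0 1] by (simp_all add: monomial3_Pair)

lemma continuous_on_poly3:
  assumes "poly3 d p"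
  shows "continuous_on S p"
proof -
  obtain c where "p = (\<lambda>x. \<Sum>m\<in>exponents3 d. c m * monomial3 m x)"
    using assms unfolding poly3_iff_monomial_sum by blast
  then show ?thesis
    unfolding monomial3_def by (auto intro!: continuous_intros)
qed

(* At a = 0 the truncated exponent a - 1 is harmless: its coefficient is 0. *)

definition monomial3_gradient :: "nat \<times> nat \<times> nat \<Rightarrow> pt3 \<Rightarrow> pt3" where
  "monomial3_gradient m x =
     (real (fst m) * monomial3 (fst m - 1, fst (snd m), snd (snd m)) x,
      real (fst (snd m)) * monomial3 (fst m, fst (snd m) - 1, snd (snd m)) x,
      real (snd (snd m)) * monomial3 (fst m, fst (snd m), snd (snd m) - 1) x)"

lemma monomial3_gradient_Pair [simp]:
  "monomial3_gradient (a, b, e) x =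
     (real a * monomial3 (a - 1, b, e) x, real b * monomial3 (a, b - 1, e) x,
      real e * monomial3 (a, b, e - 1) x)"
  by (simp add: monomial3_gradient_def)

lemma has_derivative_monomial3:
  "(monomial3 m has_derivative (\<lambda>h. inner h (monomial3_gradient m x))) (at x)"
proof -
  obtain a b e where m: "m = (a, b, e)" by (cases m)
  show ?thesis
    unfolding m monomial3_def
    by (auto intro!: derivative_eq_intros simp: monomial3_Pair inner_prod_def algebra_simps)
qed

definition poly3_field :: "nat \<Rightarrow> (pt3 \<Rightarrow> pt3) \<Rightarrow> bool" where
  "poly3_field d F \<longleftrightarrow>
     poly3 d (\<lambda>x. fst (F x)) \<and> poly3 d (\<lambda>x. fst (snd (F x))) \<and> poly3 d (\<lambda>x. snd (snd (F x)))"

lemma poly3_field_monomial3_gradient: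
  assumes "m \<in> exponents3 d"
  shows "poly3_field (d - 1) (monomial3_gradient m)"
proof -
  obtain a b e where m: "m = (a, b, e)" by (cases m)
  have partial: "poly3 (d - 1) (\<lambda>x. real k * monomial3 m' x)" if "k = 0 \<or> m' \<in> exponents3 (d - 1)" for k m'
    using that by (auto intro: poly3_cmult poly3_monomial simp: poly3_zero)
  show ?thesis
    unfolding poly3_field_def m monomial3_gradient_Pair fst_conv snd_conv
    by (intro conjI partial) (use assms in \<open>auto simp: m exponents3_def\<close>)
qed

lemma poly3_field_mono: "poly3_field d F \<Longrightarrow> d \<le> d' \<Longrightarrow> poly3_field d' F"
  unfolding poly3_field_def by (auto elim: poly3_mono)

lemma poly3_field_scaleR: "poly3_field d F \<Longrightarrow> poly3_field d (\<lambda>x. r *\<^sub>R F x)"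
  unfolding poly3_field_def by (auto intro: poly3_cmult)

lemma poly3_field_sum:
  assumes "finite S" "\<And>s. s \<in> S \<Longrightarrow> poly3_field d (F s)"
  shows "poly3_field d (\<lambda>x. \<Sum>s\<in>S. F s x)"
  using assms unfolding poly3_field_def
  by (auto simp: fst_sum snd_sum intro!: poly3_sum)

lemma poly3_gradient:
  assumes "poly3 d p"
  obtains G where "poly3_field (d - 1) G" "\<And>x. (p has_derivative (\<lambda>h. inner h (G x))) (at x)"
proof -
  obtain c where p: "p = (\<lambda>x. \<Sum>m\<in>exponents3 d. c m * monomial3 m x)"
    using assms unfolding poly3_iff_monomial_sum by blast
  let ?G = "\<lambda>x. \<Sum>m\<in>exponents3 d. c m *\<^sub>R monomial3_gradient m x"
  have "poly3_field (d - 1) ?G"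
    by (intro poly3_field_sum poly3_field_scaleR poly3_field_monomial3_gradient) auto
  moreover have "(p has_derivative (\<lambda>h. inner h (?G x))) (at x)" for x
    unfolding p inner_sum_right inner_scaleR_right
    by (intro has_derivative_sum has_derivative_mult_right has_derivative_monomial3)
  ultimately show thesis
    by (rule that)
qed

lemma poly3_field_tangential_part:
  assumes "poly3_field d G"
  shows "poly3_field (d + 2) (\<lambda>x. G x - inner x (G x) *\<^sub>R x)"
proof -
  have radial: "poly3 (Suc d) (\<lambda>x. inner x (G x))"
    using assms unfolding poly3_field_def inner_prod_def
    by (auto intro!: poly3_add poly3_mult_coordinate)
  have "poly3 (d + 2) (\<lambda>x. fst (G x))" "poly3 (d + 2) (\<lambda>x. fst (snd (G x)))"
    "poly3 (d + 2) (\<lambda>x. snd (snd (G x)))"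
    using assms unfolding poly3_field_def by (auto elim: poly3_mono)
  moreover note poly3_mult_coordinate[OF radial]
  ultimately show ?thesis
    unfolding poly3_field_def by (auto intro!: poly3_diff simp: mult.commute)
qed

section \<open>Integration over the sphere\<close>

lemma norm_sph: "norm (sph \<theta> \<phi>) = 1"
proof -
  have "(sin \<theta> * cos \<phi>)\<^sup>2 + (sin \<theta> * sin \<phi>)\<^sup>2 + (cos \<theta>)\<^sup>2 = 1"
    by (simp add: power_mult_distrib flip: distrib_left)
  then show ?thesis
    unfolding sph_def norm_prod_def by (simp add: add.assoc)
qed

lemma sphere_integral_cong:
  "(\<And>x. norm x = 1 \<Longrightarrow> f x = g x) \<Longrightarrow> sphere_integral f = sphere_integral g"
  unfolding sphere_integral_def by (simp add: norm_sph split_beta)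

lemma sphere_integral_cmult: "sphere_integral (\<lambda>x. r * f x) = r * sphere_integral f"
  unfolding sphere_integral_def split_beta by (simp add: mult.assoc)

lemma integrable_sphere_integrand:
  assumes "continuous_on UNIV f"
  shows "(\<lambda>(\<theta>, \<phi>). f (sph \<theta> \<phi>) * sin \<theta>) integrable_on cbox (0, 0) (pi, 2 * pi)"
proof -
  have "continuous_on UNIV (\<lambda>z. sph (fst z) (snd z))"
    unfolding sph_def by (intro continuous_intros)
  then have "continuous_on UNIV (\<lambda>z. f (sph (fst z) (snd z)) * sin (fst z))"
    by (intro continuous_intros continuous_on_compose2[OF assms]) auto
  then show ?thesis
    by (intro integrable_continuous) (auto simp: split_beta intro: continuous_on_subset)
qed

lemma sphere_integral_sum:
  assumes "finite S" "\<And>s. s \<in> S \<Longrightarrow> continuous_on UNIV (f s)"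
  shows "sphere_integral (\<lambda>x. \<Sum>s\<in>S. f s x) = (\<Sum>s\<in>S. sphere_integral (f s))"
proof -
  have "sphere_integral (\<lambda>x. \<Sum>s\<in>S. f s x) = integral (cbox (0, 0) (pi, 2 * pi))
      (\<lambda>z. \<Sum>s\<in>S. (\<lambda>(\<theta>, \<phi>). f s (sph \<theta> \<phi>) * sin \<theta>) z)"
    unfolding sphere_integral_def by (simp add: case_prod_beta' sum_distrib_right)
  then show ?thesis
    unfolding sphere_integral_def using assms by (simp add: integral_sum integrable_sphere_integrand)
qed

section \<open>Spherical harmonics and designs\<close>

lemma sph_harm_basis_poly3:
  "sph_harm_basis s Y \<Longrightarrow> n \<le> s \<Longrightarrow> k \<in> {1..2*n+1} \<Longrightarrow> poly3 n (Y n k)"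
  unfolding sph_harm_basis_def by (elim conjE) blast

lemma sph_harm_basis_orthonormal:
  "sph_harm_basis s Y \<Longrightarrow> n \<le> s \<Longrightarrow> k \<in> {1..2*n+1} \<Longrightarrow> n' \<le> s \<Longrightarrow> k' \<in> {1..2*n'+1} \<Longrightarrow>
    sphere_integral (\<lambda>x. Y n k x * Y n' k' x) = (if n = n' \<and> k = k' then 1 else 0)"
  unfolding sph_harm_basis_def by (elim conjE) blast

lemma sph_harm_basis_constant: "sph_harm_basis s Y \<Longrightarrow> Y 0 1 x = 1 / sqrt (4 * pi)"
  unfolding sph_harm_basis_def by (elim conjE) blast

lemma sph_harm_basis_span:
  "sph_harm_basis s Y \<Longrightarrow> m \<le> s \<Longrightarrow> poly3 m p \<Longrightarrow>
    \<exists>a. \<forall>x. norm x = 1 \<longrightarrow> p x = (\<Sum>n\<le>m. \<Sum>k\<in>{1..2*n+1}. a n k * Y n k x)"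
  unfolding sph_harm_basis_def by (elim conjE) blast

lemma sph_harm_gradients:
  assumes "sph_harm_basis s Y"
  obtains G where "\<And>n k. n \<le> s \<Longrightarrow> k \<in> {1..2*n+1} \<Longrightarrow> poly3_field (n - 1) (G n k)"
    "\<And>n k z. n \<le> s \<Longrightarrow> k \<in> {1..2*n+1} \<Longrightarrow> (Y n k has_derivative (\<lambda>h. inner h (G n k z))) (at z)"
proof -
  have "\<exists>Gnk. n \<le> s \<and> k \<in> {1..2*n+1} \<longrightarrow>
      poly3_field (n - 1) Gnk \<and> (\<forall>z. (Y n k has_derivative (\<lambda>h. inner h (Gnk z))) (at z))" for n k
    using poly3_gradient[OF sph_harm_basis_poly3[OF assms]] by metis
  then obtain G where "\<And>n k. n \<le> s \<and> k \<in> {1..2*n+1} \<longrightarrow>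
      poly3_field (n - 1) (G n k) \<and> (\<forall>z. (Y n k has_derivative (\<lambda>h. inner h (G n k z))) (at z))"
    by metis
  then show thesis
    using that by blast
qed

lemma continuous_on_sph_harm:
  "sph_harm_basis s Y \<Longrightarrow> n \<le> s \<Longrightarrow> k \<in> {1..2*n+1} \<Longrightarrow> continuous_on S (Y n k)"
  by (blast intro: continuous_on_poly3 sph_harm_basis_poly3)

lemma sphere_integral_sph_harm:
  assumes Y: "sph_harm_basis s Y" and "n \<le> s" "k \<in> {1..2*n+1}"
  shows "sphere_integral (Y n k) = (if n = 0 \<and> k = 1 then sqrt (4 * pi) else 0)"
proof -
  have "Y n k = (\<lambda>x. sqrt (4 * pi) * (Y 0 1 x * Y n k x))"
    using sph_harm_basis_constant[OF Y] by auto
  then have "sphere_integral (Y n k) = sqrt (4 * pi) * sphere_integral (\<lambda>x. Y 0 1 x * Y n k x)"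
    by (metis sphere_integral_cmult)
  then show ?thesis
    using sph_harm_basis_orthonormal[OF Y] assms by auto
qed

lemma sphere_integral_double_sum:
  assumes "finite A" "\<And>n k. n \<in> A \<Longrightarrow> k \<in> B n \<Longrightarrow> continuous_on UNIV (F n k)"
    and "\<And>n. n \<in> A \<Longrightarrow> finite (B n)"
  shows "sphere_integral (\<lambda>x. \<Sum>n\<in>A. \<Sum>k\<in>B n. c n k * F n k x)
    = (\<Sum>n\<in>A. \<Sum>k\<in>B n. c n k * sphere_integral (F n k))"
proof -
  have "sphere_integral (\<lambda>x. \<Sum>n\<in>A. \<Sum>k\<in>B n. c n k * F n k x)
      = (\<Sum>n\<in>A. sphere_integral (\<lambda>x. \<Sum>k\<in>B n. c n k * F n k x))"
    using assms by (intro sphere_integral_sum) (auto intro!: continuous_intros)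
  also have "\<dots> = (\<Sum>n\<in>A. \<Sum>k\<in>B n. c n k * sphere_integral (F n k))"
  proof (intro sum.cong refl)
    fix n assume "n \<in> A"
    then show "sphere_integral (\<lambda>x. \<Sum>k\<in>B n. c n k * F n k x)
        = (\<Sum>k\<in>B n. c n k * sphere_integral (F n k))"
      using assms by (subst sphere_integral_sum) (auto intro!: continuous_intros simp: sphere_integral_cmult)
  qed
  finally show ?thesis .
qed

lemma sph_harm_coeff_zero_if_constant_on_sphere:
  assumes Y: "sph_harm_basis s Y" and "t \<le> s"
    and const: "\<And>z. norm z = 1 \<Longrightarrow> (\<Sum>n\<in>{1..t}. \<Sum>k\<in>{1..2*n+1}. c n k * Y n k z) = \<kappa>"
    and n: "n \<in> {1..t}" and k: "k \<in> {1..2*n+1}"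
  shows "c n k = 0"
proof -
  have cont: "continuous_on UNIV (\<lambda>z. Y n' k' z * Y n k z)"
    if "n' \<in> {1..t}" "k' \<in> {1..2*n'+1}" for n' k'
    using Y that n k \<open>t \<le> s\<close> by (auto intro!: continuous_intros intro: continuous_on_sph_harm)
  have "0 = \<kappa> * sphere_integral (Y n k)"
    using sphere_integral_sph_harm[OF Y] n k \<open>t \<le> s\<close> by simp
  also have "\<dots> = sphere_integral (\<lambda>z. (\<Sum>n'\<in>{1..t}. \<Sum>k'\<in>{1..2*n'+1}. c n' k' * Y n' k' z) * Y n k z)"
    unfolding sphere_integral_cmult[symmetric] by (rule sphere_integral_cong) (simp only: const)
  also have "\<dots> = sphere_integral (\<lambda>z. \<Sum>n'\<in>{1..t}. \<Sum>k'\<in>{1..2*n'+1}. c n' k' * (Y n' k' z * Y n k z))"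
    by (simp only: sum_distrib_right mult.assoc)
  also have "\<dots> = (\<Sum>n'\<in>{1..t}. \<Sum>k'\<in>{1..2*n'+1}. c n' k' * sphere_integral (\<lambda>z. Y n' k' z * Y n k z))"
    using cont by (intro sphere_integral_double_sum) auto
  also have "\<dots> = (\<Sum>n'\<in>{1..t}. \<Sum>k'\<in>{1..2*n'+1}. if n' = n \<and> k' = k then c n' k' else 0)"
    using sph_harm_basis_orthonormal[OF Y] n k \<open>t \<le> s\<close> by (intro sum.cong refl) auto
  also have "\<dots> = (\<Sum>n'\<in>{1..t}. if n' = n then c n k else 0)"
  proof (intro sum.cong refl)
    fix n' show "(\<Sum>k'\<in>{1..2*n'+1}. if n' = n \<and> k' = k then c n' k' else 0)
        = (if n' = n then c n k else 0)"
      using k by (cases "n' = n") (simp_all only: if_True if_False simp_thms sum.delta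
        finite_atLeastAtMost sum.neutral_const)
  qed
  also have "\<dots> = c n k"
    using n by simp
  finally show ?thesis by simp
qed

lemma sum_sph_harm_indices_split:
  fixes t :: nat
  shows "(\<Sum>n\<le>t. \<Sum>k\<in>{1..2*n+1}. f n k) = f 0 1 + (\<Sum>n\<in>{1..t}. \<Sum>k\<in>{1..2*n+1}. f n k)"
proof -
  have "{..t} = insert 0 {1..t}" by auto
  then show ?thesis by simp
qed

lemma spherical_design_if_harmonic_sums_vanish:
  assumes Y: "sph_harm_basis s Y" and "t \<le> s" "0 < N" and x: "\<And>i. i < N \<Longrightarrow> norm (x i) = 1"
    and vanish: "\<And>n k. n \<in> {1..t} \<Longrightarrow> k \<in> {1..2*n+1} \<Longrightarrow> (\<Sum>i<N. Y n k (x i)) = 0"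
  shows "spherical_design t N x"
  unfolding spherical_design_def
proof (intro allI impI)
  fix p assume "poly3 t p"
  then obtain a where a: "\<And>z. norm z = 1 \<Longrightarrow> p z = (\<Sum>n\<le>t. \<Sum>k\<in>{1..2*n+1}. a n k * Y n k z)"
    using sph_harm_basis_span[OF Y \<open>t \<le> s\<close>] by blast
  have Y01: "Y 0 1 z = 1 / sqrt (4 * pi)" for z
    by (rule sph_harm_basis_constant[OF Y])
  have "(\<Sum>i<N. p (x i)) = (\<Sum>i<N. \<Sum>n\<le>t. \<Sum>k\<in>{1..2*n+1}. a n k * Y n k (x i))"
    using a x by simp
  also have "\<dots> = (\<Sum>n\<le>t. \<Sum>k\<in>{1..2*n+1}. a n k * (\<Sum>i<N. Y n k (x i)))"
    unfolding sum_distrib_left by (subst sum.swap) (rule sum.cong[OF refl], rule sum.swap)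
  also have "\<dots> = a 0 1 * (real N / sqrt (4 * pi))"
    unfolding sum_sph_harm_indices_split Y01 by (simp add: vanish)
  finally have nodes: "(\<Sum>i<N. p (x i)) = a 0 1 * (real N / sqrt (4 * pi))" .
  have "sphere_integral p = sphere_integral (\<lambda>z. \<Sum>n\<le>t. \<Sum>k\<in>{1..2*n+1}. a n k * Y n k z)"
    using a by (rule sphere_integral_cong)
  also have "\<dots> = (\<Sum>n\<le>t. \<Sum>k\<in>{1..2*n+1}. a n k * sphere_integral (Y n k))"
    using Y \<open>t \<le> s\<close> by (intro sphere_integral_double_sum) (auto intro: continuous_on_sph_harm)
  also have "\<dots> = a 0 1 * sqrt (4 * pi)"
    unfolding sum_sph_harm_indices_split using Y \<open>t \<le> s\<close> by (simp add: sphere_integral_sph_harm)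
  finally have "sphere_integral p = a 0 1 * sqrt (4 * pi)" .
  then have "1 / (4 * pi) * sphere_integral p = a 0 1 * (sqrt (4 * pi) / (4 * pi))"
    by (simp only: times_divide_eq_left times_divide_eq_right mult_1_left mult_1_right)
  also have "\<dots> = a 0 1 / sqrt (4 * pi)"
    by (subst sqrt_divide_self_eq) (simp_all add: divide_inverse)
  also have "\<dots> = 1 / real N * (\<Sum>i<N. p (x i))"
    using nodes \<open>0 < N\<close> by simp
  finally show "1 / real N * (\<Sum>i<N. p (x i)) = 1 / (4 * pi) * sphere_integral p" ..
qed

section \<open>Polynomials vanishing at the nodes\<close>

lemma basis_matrix_row_index:
  assumes "n \<le> s" "k \<in> {1..2*n+1}"
  shows "n^2 + k - 1 < (s+1)^2" "floor_sqrt (n^2 + k - 1) = n"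
proof -
  have "n^2 + k - 1 < (n+1)^2"
    using assms(2) by (auto simp: power2_eq_square)
  also have "\<dots> \<le> (s+1)^2"
    using assms(1) by (intro power_mono) auto
  finally show "n^2 + k - 1 < (s+1)^2" .
  show "floor_sqrt (n^2 + k - 1) = n"
    using assms(2) by (intro floor_sqrt_unique) (auto simp: power2_eq_square)
qed

lemma sum_rows_eq_sum_sph_harm_indices:
  "(\<Sum>r<(s+1)^2. f (floor_sqrt r) (r - (floor_sqrt r)^2 + 1)) = (\<Sum>n\<le>s. \<Sum>k\<in>{1..2*n+1}. f n k)"
proof (induction s)
  case 0
  then show ?case by simp
next
  case (Suc s)
  have rows: "{..<(Suc s + 1)^2} = {..<(s+1)^2} \<union> {(s+1)^2..<(s+1)^2 + (2*(s+1)+1)}"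
    by (auto simp: power2_eq_square)
  have last: "(\<Sum>r\<in>{(s+1)^2..<(s+1)^2 + (2*(s+1)+1)}. f (floor_sqrt r) (r - (floor_sqrt r)^2 + 1))
      = (\<Sum>k\<in>{1..2*(Suc s)+1}. f (Suc s) k)"
  proof (rule sum.reindex_bij_witness[of _ "\<lambda>k. k - 1 + (s+1)^2" "\<lambda>r. r - (s+1)^2 + 1"])
    fix r assume "r \<in> {(s+1)^2..<(s+1)^2 + (2*(s+1)+1)}"
    then have "floor_sqrt r = s + 1"
      by (intro floor_sqrt_unique) (auto simp: power2_eq_square)
    then show "f (Suc s) (r - (s + 1)\<^sup>2 + 1) = f (floor_sqrt r) (r - (floor_sqrt r)\<^sup>2 + 1)"
      by simp
  qed auto
  have "(\<Sum>r<(Suc s + 1)^2. f (floor_sqrt r) (r - (floor_sqrt r)^2 + 1))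
      = (\<Sum>r<(s+1)^2. f (floor_sqrt r) (r - (floor_sqrt r)^2 + 1))
        + (\<Sum>r\<in>{(s+1)^2..<(s+1)^2 + (2*(s+1)+1)}. f (floor_sqrt r) (r - (floor_sqrt r)^2 + 1))"
    unfolding rows by (rule sum.union_disjoint) auto
  then show ?case
    by (simp only: Suc.IH last sum.atMost_Suc)
qed

lemma singular_value_zero_if_left_kernel:
  assumes M: "M \<in> carrier_mat m n" and w: "w \<in> carrier_vec m" "w \<noteq> 0\<^sub>v m"
    and kernel: "transpose_mat M *\<^sub>v w = 0\<^sub>v n"
  shows "singular_value M 0"
proof -
  have "(M * transpose_mat M) *\<^sub>v w = M *\<^sub>v (transpose_mat M *\<^sub>v w)"
    using M w by (intro assoc_mult_mat_vec) auto
  also have "\<dots> = 0 \<cdot>\<^sub>v w"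
    unfolding kernel using M w by (intro eq_vecI) auto
  finally have "eigenvector (M * transpose_mat M) w 0"
    unfolding eigenvector_def using M w by auto
  then show ?thesis
    unfolding singular_value_def eigenvalue_def by auto
qed

lemma basis_matrix_rows_independent:
  assumes sv: "\<forall>\<sigma>. singular_value (basis_matrix Y s N x) \<sigma> \<longrightarrow> \<sigma> > 0"
    and zero: "\<And>i. i < N \<Longrightarrow> (\<Sum>n\<le>s. \<Sum>k\<in>{1..2*n+1}. a n k * Y n k (x i)) = 0"
    and n: "n \<le> s" and k: "k \<in> {1..2*n+1}"
  shows "a n k = 0"
proof (rule ccontr)
  assume "a n k \<noteq> 0"
  define M where "M = basis_matrix Y s N x"
  (* The coefficients, listed in the row order of the basis matrix, form a left null vector. *)
  define w where "w = vec ((s+1)^2) (\<lambda>r. a (floor_sqrt r) (r - (floor_sqrt r)^2 + 1))"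
  have M: "M \<in> carrier_mat ((s+1)^2) N" and w: "w \<in> carrier_vec ((s+1)^2)"
    unfolding M_def basis_matrix_def w_def by simp_all
  have "transpose_mat M *\<^sub>v w = 0\<^sub>v N"
  proof (rule eq_vecI)
    fix i assume "i < dim_vec (0\<^sub>v N)"
    then have i: "i < N" by simp
    have "(transpose_mat M *\<^sub>v w) $ i
        = (\<Sum>r<(s+1)^2. a (floor_sqrt r) (r - (floor_sqrt r)^2 + 1) * Y (floor_sqrt r) (r - (floor_sqrt r)^2 + 1) (x i))"
      using M w i
      by (auto simp: w_def M_def basis_matrix_def scalar_prod_def mult.commute atLeast0LessThan intro!: sum.cong)
    also have "\<dots> = 0"
      using sum_rows_eq_sum_sph_harm_indices[of "\<lambda>n k. a n k * Y n k (x i)"] zero[OF i] by simp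
    finally show "(transpose_mat M *\<^sub>v w) $ i = 0\<^sub>v N $ i" using i by simp
  qed (use M in simp)
  moreover have "w $ (n^2 + k - 1) = a n k"
    using basis_matrix_row_index[OF n k] k by (simp add: w_def)
  then have "w \<noteq> 0\<^sub>v ((s+1)^2)"
    using basis_matrix_row_index(1)[OF n k] \<open>a n k \<noteq> 0\<close> by auto
  ultimately have "singular_value M 0"
    using singular_value_zero_if_left_kernel M w by blast
  then show False using sv unfolding M_def by auto
qed

lemma poly3_zero_on_sphere_if_zero_at_nodes:
  assumes Y: "sph_harm_basis s Y"
    and sv: "\<forall>\<sigma>. singular_value (basis_matrix Y s N x) \<sigma> \<longrightarrow> \<sigma> > 0"
    and x: "\<And>i. i < N \<Longrightarrow> norm (x i) = 1"
    and p: "poly3 s p" and nodes: "\<And>i. i < N \<Longrightarrow> p (x i) = 0"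
    and z: "norm z = 1"
  shows "p z = 0"
proof -
  obtain a where a: "\<And>z. norm z = 1 \<Longrightarrow> p z = (\<Sum>n\<le>s. \<Sum>k\<in>{1..2*n+1}. a n k * Y n k z)"
    using sph_harm_basis_span[OF Y order_refl p] by blast
  have "(\<Sum>n\<le>s. \<Sum>k\<in>{1..2*n+1}. a n k * Y n k (x i)) = 0" if "i < N" for i
    using a[OF x[OF that]] nodes[OF that] by simp
  then have "a n k = 0" if "n \<le> s" "k \<in> {1..2*n+1}" for n k
    using basis_matrix_rows_independent[OF sv _ that] by blast
  then show ?thesis
    using a[OF z] by simp
qed

lemma poly3_field_zero_on_sphere_if_zero_at_nodes:
  assumes Y: "sph_harm_basis s Y"
    and sv: "\<forall>\<sigma>. singular_value (basis_matrix Y s N x) \<sigma> \<longrightarrow> \<sigma> > 0"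
    and x: "\<And>i. i < N \<Longrightarrow> norm (x i) = 1"
    and F: "poly3_field s F" and nodes: "\<And>i. i < N \<Longrightarrow> F (x i) = 0"
    and z: "norm z = 1"
  shows "F z = 0"
proof -
  note zero = poly3_zero_on_sphere_if_zero_at_nodes[OF Y sv x _ _ z]
  have "fst (F z) = 0" "fst (snd (F z)) = 0" "snd (snd (F z)) = 0"
    using F nodes unfolding poly3_field_def zero_prod_def
    by (auto intro: zero[of "\<lambda>x. fst (F x)"] zero[of "\<lambda>x. fst (snd (F x))"] zero[of "\<lambda>x. snd (snd (F x))"])
  then show ?thesis
    by (simp add: prod_eq_iff)
qed

section \<open>Tangential gradients on the sphere\<close>

lemma orthogonal_to_tangents_iff:
  fixes x v :: "'a::real_inner"
  assumes "norm x = 1"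
  shows "(\<forall>h. inner h x = 0 \<longrightarrow> inner h v = 0) \<longleftrightarrow> v - inner x v *\<^sub>R x = 0"
proof
  have xx: "inner x x = 1"
    using assms by (simp add: power2_norm_eq_inner[symmetric])
  define T where "T = v - inner x v *\<^sub>R x"
  have tangent: "inner T x = 0"
    unfolding T_def by (simp add: inner_diff_left xx inner_commute[of v x])
  assume "\<forall>h. inner h x = 0 \<longrightarrow> inner h v = 0"
  then have "inner T v = 0" using tangent by blast
  then have "inner T T = 0"
    by (subst (2) T_def) (simp add: inner_diff_right tangent)
  then show "v - inner x v *\<^sub>R x = 0"
    unfolding T_def by simp
next
  assume "v - inner x v *\<^sub>R x = 0"
  then have "v = inner x v *\<^sub>R x" by simp
  then show "\<forall>h. inner h x = 0 \<longrightarrow> inner h v = 0"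
    by (metis inner_scaleR_right mult_zero_right)
qed

lemma tangential_gradient_zero_on_sphere_if_zero_at_nodes:
  assumes Y: "sph_harm_basis s Y"
    and sv: "\<forall>\<sigma>. singular_value (basis_matrix Y s N x) \<sigma> \<longrightarrow> \<sigma> > 0"
    and x: "\<And>i. i < N \<Longrightarrow> norm (x i) = 1"
    and F: "poly3_field d F" "d + 2 \<le> s"
    and nodes: "\<And>i h. i < N \<Longrightarrow> inner h (x i) = 0 \<Longrightarrow> inner h (F (x i)) = 0"
    and z: "norm z = 1" "inner h z = 0"
  shows "inner h (F z) = 0"
proof -
  have T: "poly3_field s (\<lambda>z. F z - inner z (F z) *\<^sub>R z)"
    using poly3_field_tangential_part[OF F(1)] F(2) by (rule poly3_field_mono)
  have "F (x i) - inner (x i) (F (x i)) *\<^sub>R x i = 0" if "i < N" for i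
    using orthogonal_to_tangents_iff[OF x[OF that]] nodes[OF that] by blast
  from poly3_field_zero_on_sphere_if_zero_at_nodes[OF Y sv x T this z(1)]
  have "F z - inner z (F z) *\<^sub>R z = 0" by simp
  then show ?thesis
    using orthogonal_to_tangents_iff[OF z(1)] z(2) by blast
qed

lemma has_derivative_normalize:
  fixes y :: "'a::real_inner"
  assumes "y \<noteq> 0"
  shows "((\<lambda>y. inverse (norm y) *\<^sub>R y) has_derivative
    (\<lambda>h. inverse (norm y) *\<^sub>R h - (inverse (norm y) ^ 3 * inner h y) *\<^sub>R y)) (at y)"
proof -
  have "((\<lambda>y. inverse (norm y)) has_derivative (\<lambda>h. - (inverse (norm y) * inner h (sgn y) * inverse (norm y)))) (at y)"
    using assms by (intro Deriv.has_derivative_inverse has_derivative_norm) auto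
  from has_derivative_scaleR[OF this has_derivative_ident] show ?thesis
    by (rule has_derivative_eq_rhs) (auto simp: fun_eq_iff sgn_div_norm algebra_simps power3_eq_cube divide_inverse)
qed

(* The function y \<mapsto> g (y / norm y) has zero derivative on the connected set - {0}. *)
lemma constant_on_sphere_if_tangential_derivative_zero:
  fixes g :: "'a::euclidean_space \<Rightarrow> real"
  assumes "2 \<le> DIM('a)" and deriv: "\<And>z. (g has_derivative g' z) (at z)"
    and tangential: "\<And>z h. norm z = 1 \<Longrightarrow> inner h z = 0 \<Longrightarrow> g' z h = 0"
    and "norm z = 1" "norm w = 1"
  shows "g z = g w"
proof -
  define H where "H y = g (inverse (norm y) *\<^sub>R y)" for y
  have "(H has_derivative (\<lambda>h. 0)) (at y)" if "y \<in> - {0}" for y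
  proof -
    have y: "y \<noteq> 0" using that by simp
    have "inner (inverse (norm y) *\<^sub>R h - (inverse (norm y) ^ 3 * inner h y) *\<^sub>R y) (inverse (norm y) *\<^sub>R y) = 0"
      for h
      using y by (simp add: inner_diff_left power2_norm_eq_inner[symmetric] field_simps power3_eq_cube power2_eq_square)
    then show ?thesis
      unfolding H_def using has_derivative_compose[OF has_derivative_normalize[OF y] deriv]
      by (simp add: o_def tangential y)
  qed
  then have "H z = H w"
    using assms connected_punctured_universe[of 0]
    by (intro has_derivative_zero_unique_connected[of "- {0}"]) auto
  then show ?thesis
    using assms by (simp add: H_def)
qed

section \<open>Stationary point sets\<close>

lemma norm_great_circle:
  fixes x u :: "'a::real_inner"
  assumes "norm x = 1" "norm u = 1" "inner u x = 0"
  shows "norm (cos s *\<^sub>R x + sin s *\<^sub>R u) = 1"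
proof -
  have "inner x x = 1" "inner u u = 1"
    using assms(1,2) by (simp_all add: power2_norm_eq_inner[symmetric])
  then have "inner (cos s *\<^sub>R x + sin s *\<^sub>R u) (cos s *\<^sub>R x + sin s *\<^sub>R u) = (cos s)\<^sup>2 + (sin s)\<^sup>2"
    using assms(3) by (simp add: inner_add_left inner_add_right inner_commute[of x u] power2_eq_square)
  then show ?thesis
    by (simp add: norm_eq_sqrt_inner)
qed

lemma A_Nt_fun_upd:
  assumes "i < N"
  shows "A_Nt Y N t (x(i := v)) = 4 * pi / (real N)^2 *
    (\<Sum>n\<in>{1..t}. \<Sum>k\<in>{1..2*n+1}. (Y n k v + ((\<Sum>j<N. Y n k (x j)) - Y n k (x i)))^2)"
proof -
  have "(\<Sum>j<N. Y n k ((x(i := v)) j)) = Y n k v + ((\<Sum>j<N. Y n k (x j)) - Y n k (x i))" for n k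
    using assms by (simp add: sum.remove[of "{..<N}" i])
  then show ?thesis
    unfolding A_Nt_def by simp
qed

lemma DERIV_A_Nt_fun_upd:
  assumes "i < N" "\<gamma> 0 = x i"
    and "\<And>n k. n \<in> {1..t} \<Longrightarrow> k \<in> {1..2*n+1} \<Longrightarrow>
      ((\<lambda>s. Y n k (\<gamma> s)) has_field_derivative D n k) (at 0)"
  shows "((\<lambda>s. A_Nt Y N t (x(i := \<gamma> s))) has_field_derivative
    4 * pi / (real N)^2 * (\<Sum>n\<in>{1..t}. \<Sum>k\<in>{1..2*n+1}. 2 * (\<Sum>j<N. Y n k (x j)) * D n k)) (at 0)"
  unfolding A_Nt_fun_upd[OF assms(1)]
proof (intro DERIV_cmult DERIV_sum)
  fix n k assume nk: "n \<in> {1..t}" "k \<in> {1..2*n+1}"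
  define C where "C = (\<Sum>j<N. Y n k (x j)) - Y n k (x i)"
  have "((\<lambda>s. (Y n k (\<gamma> s) + C)^2) has_field_derivative
      of_nat 2 * ((D n k + 0) * (Y n k (\<gamma> 0) + C)^(2 - Suc 0))) (at 0)"
    by (intro DERIV_power DERIV_add assms(3)[OF nk] DERIV_const)
  then show "((\<lambda>s. (Y n k (\<gamma> s) + ((\<Sum>j<N. Y n k (x j)) - Y n k (x i)))^2) has_field_derivative
      2 * (\<Sum>j<N. Y n k (x j)) * D n k) (at 0)"
    by (simp add: assms(2) C_def mult_ac)
qed

lemma stationary_A_gradient_orthogonal:
  assumes stat: "stationary_A Y N t x" and i: "i < N" and xi: "norm (x i) = 1"
    and grad: "\<And>n k. n \<in> {1..t} \<Longrightarrow> k \<in> {1..2*n+1} \<Longrightarrow>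
      (Y n k has_derivative (\<lambda>h. inner h (G n k))) (at (x i))"
    and u: "inner u (x i) = 0"
  shows "inner u (\<Sum>n\<in>{1..t}. \<Sum>k\<in>{1..2*n+1}. (\<Sum>j<N. Y n k (x j)) *\<^sub>R G n k) = 0"
proof (cases "u = 0")
  case False
  define R where "R n k = (\<Sum>j<N. Y n k (x j))" for n k
  define v where "v = inverse (norm u) *\<^sub>R u"
  define \<gamma> where "\<gamma> s = cos s *\<^sub>R x i + sin s *\<^sub>R v" for s
  have "norm v = 1" "inner v (x i) = 0"
    using False u by (simp_all add: v_def)
  then have sphere: "norm (\<gamma> s) = 1" for s
    unfolding \<gamma>_def using xi by (intro norm_great_circle)
  have \<gamma>0: "\<gamma> 0 = x i"
    by (simp add: \<gamma>_def)
  have \<gamma>': "(\<gamma> has_derivative (\<lambda>h. h *\<^sub>R v)) (at 0)"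
    unfolding \<gamma>_def by (auto intro!: derivative_eq_intros)
  have "((\<lambda>s. Y n k (\<gamma> s)) has_field_derivative inner v (G n k)) (at 0)"
    if "n \<in> {1..t}" "k \<in> {1..2*n+1}" for n k
    unfolding has_field_derivative_def
    using has_derivative_compose[OF \<gamma>' grad[OF that, folded \<gamma>0]]
    by (rule has_derivative_eq_rhs) (simp add: fun_eq_iff)
  from DERIV_A_Nt_fun_upd[where \<gamma> = \<gamma> and x = x and D = "\<lambda>n k. inner v (G n k)", OF i \<gamma>0 this]
  have "((\<lambda>s. A_Nt Y N t (x(i := \<gamma> s))) has_field_derivative
      4 * pi / (real N)^2 * (\<Sum>n\<in>{1..t}. \<Sum>k\<in>{1..2*n+1}. 2 * R n k * inner v (G n k))) (at 0)"
    unfolding R_def .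
  moreover have "\<gamma> differentiable (at 0)"
    using \<gamma>' unfolding differentiable_def by blast
  then have "((\<lambda>s. A_Nt Y N t (x(i := \<gamma> s))) has_field_derivative 0) (at 0)"
    by (rule stat[unfolded stationary_A_def, rule_format, of i \<gamma>, OF i sphere \<gamma>0])
  ultimately have "4 * pi / (real N)^2 * (\<Sum>n\<in>{1..t}. \<Sum>k\<in>{1..2*n+1}. 2 * R n k * inner v (G n k)) = 0"
    by (rule DERIV_unique)
  moreover have "4 * pi / (real N)^2 \<noteq> 0"
    using i by simp
  ultimately have "(\<Sum>n\<in>{1..t}. \<Sum>k\<in>{1..2*n+1}. 2 * R n k * inner v (G n k)) = 0"
    by simp
  then have "2 * (\<Sum>n\<in>{1..t}. \<Sum>k\<in>{1..2*n+1}. R n k * inner v (G n k)) = 0"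
    by (simp only: sum_distrib_left mult.assoc)
  then have "inner v (\<Sum>n\<in>{1..t}. \<Sum>k\<in>{1..2*n+1}. R n k *\<^sub>R G n k) = 0"
    by (simp only: inner_sum_right inner_scaleR_right)
  then have "inverse (norm u) * inner u (\<Sum>n\<in>{1..t}. \<Sum>k\<in>{1..2*n+1}. R n k *\<^sub>R G n k) = 0"
    by (simp only: v_def inner_scaleR_left)
  then show ?thesis
    using False unfolding R_def by simp
qed simp

theorem theorem2:
  fixes t N :: nat and x :: "nat \<Rightarrow> real \<times> real \<times> real"
    and Y :: "nat \<Rightarrow> nat \<Rightarrow> real \<times> real \<times> real \<Rightarrow> real"
  assumes "t \<ge> 2" and "N \<ge> (t + 2)^2"
    and "sph_harm_basis (t + 1) Y"
    and "\<forall>i<N. norm (x i) = 1" and "inj_on x {..<N}"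
    and "stationary_A Y N t x"
    and "\<forall>\<sigma>. singular_value (basis_matrix Y (t + 1) N x) \<sigma> \<longrightarrow> \<sigma> > 0"
  shows "spherical_design t N x"
proof -
  note Y = assms(3)
  have x: "\<And>i. i < N \<Longrightarrow> norm (x i) = 1" and "0 < N"
    using assms(2,4) by (auto intro: order.strict_trans2[OF zero_less_power])
  obtain G where G: "\<And>n k. n \<le> t + 1 \<Longrightarrow> k \<in> {1..2*n+1} \<Longrightarrow> poly3_field (n - 1) (G n k)"
    "\<And>n k z. n \<le> t + 1 \<Longrightarrow> k \<in> {1..2*n+1} \<Longrightarrow> (Y n k has_derivative (\<lambda>h. inner h (G n k z))) (at z)"
    using sph_harm_gradients[OF Y] by blast
  define R where "R n k = (\<Sum>j<N. Y n k (x j))" for n k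
  define g where "g z = (\<Sum>n\<in>{1..t}. \<Sum>k\<in>{1..2*n+1}. R n k * Y n k z)" for z
  define grad where "grad z = (\<Sum>n\<in>{1..t}. \<Sum>k\<in>{1..2*n+1}. R n k *\<^sub>R G n k z)" for z
  have g': "(g has_derivative (\<lambda>h. inner h (grad z))) (at z)" for z
    unfolding g_def grad_def inner_sum_right inner_scaleR_right
    using G(2) by (intro has_derivative_sum has_derivative_mult_right) auto
  have "poly3_field (t - 1) grad"
    unfolding grad_def by (intro poly3_field_sum poly3_field_scaleR poly3_field_mono[OF G(1)]) auto
  moreover have "inner h (grad (x i)) = 0" if "i < N" "inner h (x i) = 0" for i h
    unfolding grad_def R_def
    by (rule stationary_A_gradient_orthogonal[OF assms(6) that(1) x[OF that(1)] G(2) that(2)]) auto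
  ultimately have tangential: "inner h (grad z) = 0" if "norm z = 1" "inner h z = 0" for z h
    using assms(1) tangential_gradient_zero_on_sphere_if_zero_at_nodes[OF Y assms(7) x _ _ _ that] by simp
  have "g z = g (1, 0, 0)" if "norm z = 1" for z
    by (rule constant_on_sphere_if_tangential_derivative_zero[OF _ g' tangential that]) (simp_all add: norm_Pair)
  then have "R n k = 0" if "n \<in> {1..t}" "k \<in> {1..2*n+1}" for n k
    using sph_harm_coeff_zero_if_constant_on_sphere[OF Y le_add1 _ that] unfolding g_def by blast
  then show ?thesis
    unfolding R_def using spherical_design_if_harmonic_sums_vanish[OF Y le_add1 \<open>0 < N\<close>] x by blast
qed

end
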